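(* For weighted formulas, the proof system consisting of Axiom (A), Rules (R1)–(R5), and Rule (R6w) (in place of (R6)) is sound and complete: for every finite set $\Gamma$ of sentences and every sentence $\gamma$ (with weighted formulas as components), $\Gamma\vdash\gamma$ if and only if $\Gamma\models\gamma$.
   Context: Weighted setting. Fix a finite set of atomic propositions, finite sets of binary and unary connectives; each binary $\alpha$ has an arbitrary function $f_\alpha:[0,1]^2\times\mathbb R^2\to[0,1]$ and each unary $\rho$ an arbitrary $f_\rho:[0,1]\times\mathbb R\to[0,1]$. Weighted formulas: atoms are formulas; if $\sigma_1,\sigma_2,\sigma$ are formulas and $w_1,w_2,w\in\mathbb R$ are weights, then $(\sigma_1\,\alpha\,\sigma_2,w_1,w_2)$ and $(\rho\sigma,w)$ are formulas; their subformulas are $\sigma_1,\sigma_2$ resp. $\sigma$. A model assigns values in $[0,1]$ to atoms; the value of $(\sigma_1\,\alpha\,\sigma_2,w_1,w_2)$ is $f_\alpha(s_1,s_2,w_1,w_2)$ and of $(\rho\sigma,w)$ is $f_\rho(s,w)$, where $s_1,s_2,s$ are the values of $\sigma_1,\sigma_2,\sigma$. A sentence $(\sigma_1,\ldots,\sigma_k,S)$ has pairwise distinct formulas and $S\subseteq[0,1]^k$; $M$ satisfies it iff the tuple of values of the $\sigma_i$ lies in $S$. $\Gamma\models\gamma$: every model of all of $\Gamma$ is a model of $\gamma$; $\Gamma\vdash\gamma$: $\gamma$ derivable from $\Gamma$ by: (A) $(\sigma,[0,1])$ for every formula $\sigma$. (R1) For a permutation $\pi$: from $(\sigma_1,\ldots,\sigma_k,S)$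 infer $(\sigma_{\pi(1)},\ldots,\sigma_{\pi(k)},\{(s_{\pi(1)},\ldots,s_{\pi(k)}):(s_1,\ldots,s_k)\in S\})$. (R2) From $(\sigma_1,\ldots,\sigma_k,S)$ infer $(\sigma_1,\ldots,\sigma_m,S\times[0,1]^{m-k})$ (components kept distinct). (R3) From $(\sigma_1,\ldots,\sigma_k,S_1)$ and $(\sigma_1,\ldots,\sigma_k,S_2)$ infer $(\sigma_1,\ldots,\sigma_k,S_1\cap S_2)$. (R4) For $0<r<k$: from $(\sigma_1,\ldots,\sigma_k,S)$ infer $(\sigma_1,\ldots,\sigma_{k-r},\{(s_1,\ldots,s_{k-r}):(s_1,\ldots,s_k)\in S\})$. (R5) From $(\sigma_1,\ldots,\sigma_k,S)$ infer $(\sigma_1,\ldots,\sigma_k,S')$ whenever $S\subseteq S'\subseteq[0,1]^k$. (R6w) From $(\sigma_1,\ldots,\sigma_k,S)$ infer $(\sigma_1,\ldots,\sigma_k,S')$, where $S'$ is the set of $(s_1,\ldots,s_k)\in S$ such that $f_\alpha(s_i,s_j,w_1,w_2)=s_m$ whenever $\sigma_m$ is $(\sigma_i\,\alpha\,\sigma_j,w_1,w_2)$, and $f_\rho(s_i,w)=s_j$ whenever $\sigma_j$ is $(\rho\sigma_i,w)$. *)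

theory Defs
  imports Complex_Main
begin

text \<open>Atoms of type 'a, binary connectives of type 'b, unary connectives of type 'u.
  WBin alpha s1 s2 w1 w2 stands for (s1 alpha s2, w1, w2); WUn rho s w stands for (rho s, w).\<close>

datatype ('a, 'b, 'u) wform =
    WAtom 'a
  | WBin 'b "('a, 'b, 'u) wform" "('a, 'b, 'u) wform" real real
  | WUn 'u "('a, 'b, 'u) wform" real


primrec wval :: "('b \<Rightarrow> real \<Rightarrow> real \<Rightarrow> real \<Rightarrow> real \<Rightarrow> real) \<Rightarrow> ('u \<Rightarrow> real \<Rightarrow> real \<Rightarrow> real)
   \<Rightarrow> ('a \<Rightarrow> real) \<Rightarrow> ('a, 'b, 'u) wform \<Rightarrow> real" where
  "wval fb fu M (WAtom a) = M a"
| "wval fb fu M (WBin al s1 s2 w1 w2) = fb al (wval fb fu M s1) (wval fb fu M s2) w1 w2"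
| "wval fb fu M (WUn r s w) = fu r (wval fb fu M s) w"

definition admissible_conns ::
  "('b \<Rightarrow> real \<Rightarrow> real \<Rightarrow> real \<Rightarrow> real \<Rightarrow> real) \<Rightarrow> ('u \<Rightarrow> real \<Rightarrow> real \<Rightarrow> real) \<Rightarrow> bool" where
  "admissible_conns fb fu \<longleftrightarrow>
     (\<forall>al x y w1 w2. x \<in> {0..1} \<longrightarrow> y \<in> {0..1} \<longrightarrow> fb al x y w1 w2 \<in> {0..1}) \<and>
     (\<forall>r x w. x \<in> {0..1} \<longrightarrow> fu r x w \<in> {0..1})"

definition is_model :: "('a \<Rightarrow> real) \<Rightarrow> bool" where
  "is_model M \<longleftrightarrow> (\<forall>a. M a \<in> {0..1})"

text \<open>A sentence (sigma_1,...,sigma_k,S) is a pair of a list of formulas and a set of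
  k-tuples (represented as real lists of length k).\<close>
type_synonym ('a, 'b, 'u) wsentence = "('a, 'b, 'u) wform list \<times> real list set"

definition unit_cube :: "nat \<Rightarrow> real list set" where
  "unit_cube k = {s. length s = k \<and> set s \<subseteq> {0..1}}"

definition is_sentence :: "('a, 'b, 'u) wsentence \<Rightarrow> bool" where
  "is_sentence g \<longleftrightarrow> fst g \<noteq> [] \<and> distinct (fst g) \<and> snd g \<subseteq> unit_cube (length (fst g))"

definition wsat :: "('b \<Rightarrow> real \<Rightarrow> real \<Rightarrow> real \<Rightarrow> real \<Rightarrow> real) \<Rightarrow> ('u \<Rightarrow> real \<Rightarrow> real \<Rightarrow> real)
   \<Rightarrow> ('a \<Rightarrow> real) \<Rightarrow> ('a, 'b, 'u) wsentence \<Rightarrow> bool" where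
  "wsat fb fu M g \<longleftrightarrow> map (wval fb fu M) (fst g) \<in> snd g"

definition wentails :: "('b \<Rightarrow> real \<Rightarrow> real \<Rightarrow> real \<Rightarrow> real \<Rightarrow> real) \<Rightarrow> ('u \<Rightarrow> real \<Rightarrow> real \<Rightarrow> real)
   \<Rightarrow> ('a, 'b, 'u) wsentence set \<Rightarrow> ('a, 'b, 'u) wsentence \<Rightarrow> bool" where
  "wentails fb fu \<Gamma> g \<longleftrightarrow>
     (\<forall>M. is_model M \<longrightarrow> (\<forall>d\<in>\<Gamma>. wsat fb fu M d) \<longrightarrow> wsat fb fu M g)"

definition r6w_set :: "('b \<Rightarrow> real \<Rightarrow> real \<Rightarrow> real \<Rightarrow> real \<Rightarrow> real) \<Rightarrow> ('u \<Rightarrow> real \<Rightarrow> real \<Rightarrow> real)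
   \<Rightarrow> ('a, 'b, 'u) wform list \<Rightarrow> real list set \<Rightarrow> real list set" where
  "r6w_set fb fu xs S = {s \<in> S.
     (\<forall>i<length xs. \<forall>j<length xs. \<forall>m<length xs. \<forall>al w1 w2.
        xs ! m = WBin al (xs ! i) (xs ! j) w1 w2 \<longrightarrow> fb al (s ! i) (s ! j) w1 w2 = s ! m) \<and>
     (\<forall>i<length xs. \<forall>j<length xs. \<forall>r w.
        xs ! j = WUn r (xs ! i) w \<longrightarrow> fu r (s ! i) w = s ! j)}"

inductive wderiv :: "('b \<Rightarrow> real \<Rightarrow> real \<Rightarrow> real \<Rightarrow> real \<Rightarrow> real) \<Rightarrow> ('u \<Rightarrow> real \<Rightarrow> real \<Rightarrow> real)
   \<Rightarrow> ('a, 'b, 'u) wsentence set \<Rightarrow> ('a, 'b, 'u) wsentence \<Rightarrow> bool"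
  for fb fu \<Gamma> where
  hyp: "g \<in> \<Gamma> \<Longrightarrow> wderiv fb fu \<Gamma> g"
| A: "wderiv fb fu \<Gamma> ([\<sigma>], unit_cube 1)"
| R1: "wderiv fb fu \<Gamma> (xs, S) \<Longrightarrow> bij_betw \<pi> {..<length xs} {..<length xs} \<Longrightarrow>
       wderiv fb fu \<Gamma> (map (\<lambda>i. xs ! \<pi> i) [0..<length xs],
                       (\<lambda>s. map (\<lambda>i. s ! \<pi> i) [0..<length xs]) ` S)"
| R2: "wderiv fb fu \<Gamma> (xs, S) \<Longrightarrow> distinct (xs @ ys) \<Longrightarrow>
       wderiv fb fu \<Gamma> (xs @ ys, {s @ t | s t. s \<in> S \<and> t \<in> unit_cube (length ys)})"
| R3: "wderiv fb fu \<Gamma> (xs, S1) \<Longrightarrow> wderiv fb fu \<Gamma> (xs, S2) \<Longrightarrow>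
       wderiv fb fu \<Gamma> (xs, S1 \<inter> S2)"
| R4: "wderiv fb fu \<Gamma> (xs, S) \<Longrightarrow> 0 < r \<Longrightarrow> r < length xs \<Longrightarrow>
       wderiv fb fu \<Gamma> (take (length xs - r) xs, take (length xs - r) ` S)"
| R5: "wderiv fb fu \<Gamma> (xs, S) \<Longrightarrow> S \<subseteq> S' \<Longrightarrow> S' \<subseteq> unit_cube (length xs) \<Longrightarrow>
       wderiv fb fu \<Gamma> (xs, S')"
| R6w: "wderiv fb fu \<Gamma> (xs, S) \<Longrightarrow> wderiv fb fu \<Gamma> (xs, r6w_set fb fu xs S)"

end

theory Submission
  imports Defs
begin

text \<open>For completeness, list the subformulas of all formulas
  occurring in \<open>\<Gamma>\<close> and \<open>\<gamma>\<close> without repetition as \<open>L\<close>. Rules (R1), (R2) and (R3) lift every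
  hypothesis to a constraint on tuples indexed by \<open>L\<close>; intersecting them and applying (R6w)
  leaves only tuples that respect all connectives along \<open>L\<close>. Since \<open>L\<close> is closed under
  subformulas, such a tuple is exactly the value tuple of the model read off from its atom
  components. That model satisfies \<open>\<Gamma>\<close>, hence \<open>\<gamma>\<close>, and (R1), (R4), (R5) project the tuples
  back onto the formulas of \<open>\<gamma>\<close>.\<close>

primrec index_of :: "'x list \<Rightarrow> 'x \<Rightarrow> nat" where
  "index_of [] x = 0"
| "index_of (y # ys) x = (if y = x then 0 else Suc (index_of ys x))"

lemma index_of_less_length: "x \<in> set xs \<Longrightarrow> index_of xs x < length xs"
  by (induction xs) auto

lemma nth_index_of: "x \<in> set xs \<Longrightarrow> xs ! index_of xs x = x"
  by (induction xs) auto

lemma index_of_nth: "distinct xs \<Longrightarrow> i < length xs \<Longrightarrow> index_of xs (xs ! i) = i"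
proof (induction xs arbitrary: i)
  case (Cons y ys)
  then show ?case by (cases i) (auto simp: nth_mem)
qed simp

lemma index_of_append_left: "x \<in> set xs \<Longrightarrow> index_of (xs @ ys) x = index_of xs x"
  by (induction xs) auto

text \<open>Tuples are indexed by the formulas of a repetition-free list \<open>L\<close>;
  \<open>project L xs s\<close> reads off the components of \<open>s\<close> at the formulas \<open>xs\<close>.\<close>

definition project :: "'x list \<Rightarrow> 'x list \<Rightarrow> real list \<Rightarrow> real list" where
  "project L xs s = map (\<lambda>x. s ! index_of L x) xs"

lemma length_project [simp]: "length (project L xs s) = length xs"
  by (simp add: project_def)

lemma project_append: "project L (xs @ ys) s = project L xs s @ project L ys s"
  by (simp add: project_def)

lemma project_self: "distinct L \<Longrightarrow> length s = length L \<Longrightarrow> project L L s = s"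
  by (rule nth_equalityI) (auto simp: project_def index_of_nth)

lemma project_project:
  assumes "set xs \<subseteq> set ys" "set ys \<subseteq> set L"
  shows "project ys xs (project L ys s) = project L xs s"
  unfolding project_def
  using assms by (intro map_cong) (auto simp: index_of_less_length nth_index_of)

lemma project_append_left:
  assumes "distinct xs" "length s = length xs"
  shows "project (xs @ ys) xs (s @ t) = s"
proof -
  have "project (xs @ ys) xs (s @ t) = project xs xs s"
    unfolding project_def
    using assms(2) by (intro map_cong) (auto simp: index_of_append_left index_of_less_length nth_append)
  then show ?thesis using project_self[OF assms] by simp
qed

lemma project_in_unit_cube:
  assumes "set xs \<subseteq> set L" "s \<in> unit_cube (length L)"
  shows "project L xs s \<in> unit_cube (length xs)"
proof -
  have "s ! index_of L x \<in> set s" if "x \<in> set xs" for x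
    using that assms by (auto simp: unit_cube_def intro!: nth_mem index_of_less_length)
  then show ?thesis using assms(2) by (auto simp: unit_cube_def project_def)
qed

lemma append_in_unit_cube:
  "s \<in> unit_cube m \<Longrightarrow> t \<in> unit_cube n \<Longrightarrow> s @ t \<in> unit_cube (m + n)"
  by (simp add: unit_cube_def)

subsection \<open>Soundness\<close>

lemma wval_in_unit_interval:
  "admissible_conns fb fu \<Longrightarrow> is_model M \<Longrightarrow> wval fb fu M \<phi> \<in> {0..1}"
  by (induction \<phi>) (auto simp: admissible_conns_def is_model_def simp del: atLeastAtMost_iff)

lemma map_wval_in_unit_cube:
  "admissible_conns fb fu \<Longrightarrow> is_model M \<Longrightarrow> map (wval fb fu M) xs \<in> unit_cube (length xs)"
  using wval_in_unit_interval by (fastforce simp: unit_cube_def simp del: atLeastAtMost_iff)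

lemma wderiv_sound:
  assumes "wderiv fb fu \<Gamma> g" "admissible_conns fb fu" "is_model M" "\<forall>d\<in>\<Gamma>. wsat fb fu M d"
  shows "wsat fb fu M g"
  using assms(1)
proof induction
  case (A \<sigma>)
  show ?case using map_wval_in_unit_cube[OF assms(2,3), of "[\<sigma>]"] by (simp add: wsat_def)
next
  case (R1 xs S \<pi>)
  have "\<forall>i<length xs. \<pi> i < length xs" using R1.hyps(2) by (auto simp: bij_betw_def)
  then have "map (wval fb fu M) (map (\<lambda>i. xs ! \<pi> i) [0..<length xs])
      = map (\<lambda>i. map (wval fb fu M) xs ! \<pi> i) [0..<length xs]"
    by (intro nth_equalityI) auto
  then show ?case using R1.IH by (auto simp: wsat_def)
next
  case (R2 xs S ys)
  then show ?case using map_wval_in_unit_cube[OF assms(2,3), of ys] by (auto simp: wsat_def)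
next
  case (R4 xs S r)
  then show ?case by (auto simp: wsat_def take_map[symmetric])
qed (use assms in \<open>auto simp: wsat_def r6w_set_def\<close>)

lemma wderiv_reorder:
  assumes der: "wderiv fb fu \<Gamma> (xs, S)"
    and dist: "distinct xs" "distinct ys" and same: "set xs = set ys"
  shows "wderiv fb fu \<Gamma> (ys, project xs ys ` S)"
proof -
  have len: "length ys = length xs" using dist same distinct_card by metis
  define \<pi> where "\<pi> i = index_of xs (ys ! i)" for i
  have "inj_on \<pi> {..<length xs}"
  proof (rule inj_onI)
    fix i j assume ij: "i \<in> {..<length xs}" "j \<in> {..<length xs}" and "\<pi> i = \<pi> j"
    then have "ys ! i = ys ! j"
      using len same by (metis \<pi>_def lessThan_iff nth_index_of nth_mem)
    then show "i = j" using ij len dist(2) nth_eq_iff_index_eq by fastforce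
  qed
  moreover have "\<pi> ` {..<length xs} \<subseteq> {..<length xs}"
    unfolding \<pi>_def using len same by (auto intro: index_of_less_length)
  ultimately have "bij_betw \<pi> {..<length xs} {..<length xs}"
    by (simp add: bij_betw_def endo_inj_surj)
  note permuted = R1[OF der this]
  have formulas: "map (\<lambda>i. xs ! \<pi> i) [0..<length xs] = ys"
    using len same by (intro nth_equalityI) (auto simp: \<pi>_def nth_index_of nth_mem)
  have tuples: "(\<lambda>s. map (\<lambda>i. s ! \<pi> i) [0..<length xs]) = project xs ys"
    using len by (intro ext nth_equalityI) (auto simp: \<pi>_def project_def)
  show ?thesis using permuted unfolding formulas tuples .
qed

lemma wderiv_cylinder:
  assumes der: "wderiv fb fu \<Gamma> (xs, S)" and S: "S \<subseteq> unit_cube (length xs)"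
    and dist: "distinct xs" "distinct L" and sub: "set xs \<subseteq> set L"
  shows "wderiv fb fu \<Gamma> (L, {s \<in> unit_cube (length L). project L xs s \<in> S})"
proof -
  define ys where "ys = filter (\<lambda>x. x \<notin> set xs) L"
  have dist': "distinct (xs @ ys)" and same: "set (xs @ ys) = set L"
    using dist sub by (auto simp: ys_def)
  have "wderiv fb fu \<Gamma> (xs @ ys, {s @ t |s t. s \<in> S \<and> t \<in> unit_cube (length ys)})"
    using der dist' by (rule R2)
  from wderiv_reorder[OF this dist' dist(2) same]
  have der_L: "wderiv fb fu \<Gamma> (L, project (xs @ ys) L ` {s @ t |s t. s \<in> S \<and> t \<in> unit_cube (length ys)})" .
  have cylinder: "project (xs @ ys) L (s @ t) \<in> {u \<in> unit_cube (length L). project L xs u \<in> S}"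
    if s: "s \<in> S" and t: "t \<in> unit_cube (length ys)" for s t
  proof -
    have s_cube: "s \<in> unit_cube (length xs)" using s S by blast
    then have "s @ t \<in> unit_cube (length (xs @ ys))"
      using append_in_unit_cube[OF _ t] by simp
    then have "project (xs @ ys) L (s @ t) \<in> unit_cube (length L)"
      using same by (intro project_in_unit_cube) auto
    moreover have "project L xs (project (xs @ ys) L (s @ t)) = project (xs @ ys) xs (s @ t)"
      using sub same by (intro project_project) auto
    moreover have "project (xs @ ys) xs (s @ t) = s"
      using s_cube project_append_left[OF dist(1)] by (simp add: unit_cube_def)
    ultimately show ?thesis using s by simp
  qed
  show ?thesis
    by (rule R5[OF der_L]) (use cylinder in \<open>auto simp: unit_cube_def\<close>)
qed

lemma wderiv_unit_cube:
  assumes "L \<noteq> []" "distinct L"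
  shows "wderiv fb fu \<Gamma> (L, unit_cube (length L))"
proof -
  have "wderiv fb fu \<Gamma> (L, {s \<in> unit_cube (length L). project L [hd L] s \<in> unit_cube 1})"
    using assms by (intro wderiv_cylinder[OF A]) auto
  moreover have "project L [hd L] s \<in> unit_cube 1" if "s \<in> unit_cube (length L)" for s
    using project_in_unit_cube[OF _ that, of "[hd L]"] assms(1) by simp
  then have "{s \<in> unit_cube (length L). project L [hd L] s \<in> unit_cube 1} = unit_cube (length L)"
    by blast
  ultimately show ?thesis by simp
qed

lemma wderiv_hyps_cylinder:
  assumes "finite \<Delta>" "\<Delta> \<subseteq> \<Gamma>" "\<forall>d\<in>\<Delta>. is_sentence d" "\<forall>d\<in>\<Delta>. set (fst d) \<subseteq> set L"
    "distinct L" "L \<noteq> []"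
  shows "wderiv fb fu \<Gamma> (L, {s \<in> unit_cube (length L). \<forall>d\<in>\<Delta>. project L (fst d) s \<in> snd d})"
  using assms(1-4)
proof (induction \<Delta> rule: finite_induct)
  case empty
  then show ?case using wderiv_unit_cube[OF assms(6,5)] by simp
next
  case (insert d \<Delta>)
  obtain xs S where d: "d = (xs, S)" by (cases d)
  have "wderiv fb fu \<Gamma> (L, {s \<in> unit_cube (length L). project L xs s \<in> S})"
    using insert.prems d assms(5) by (intro wderiv_cylinder hyp) (auto simp: is_sentence_def)
  from R3[OF insert.IH this] insert.prems show ?case
    by (simp add: d Int_def conj_ac)
qed

lemma wderiv_take:
  assumes der: "wderiv fb fu \<Gamma> (xs @ ys, E)" and "xs \<noteq> []"
    and len: "\<forall>e\<in>E. length e = length (xs @ ys)"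
  shows "wderiv fb fu \<Gamma> (xs, take (length xs) ` E)"
proof (cases "ys = []")
  case True
  then have "take (length xs) ` E = E" using len by force
  then show ?thesis using der True by simp
next
  case False
  have "wderiv fb fu \<Gamma> (take (length (xs @ ys) - length ys) (xs @ ys),
      take (length (xs @ ys) - length ys) ` E)"
    using False \<open>xs \<noteq> []\<close> by (intro R4[OF der]) auto
  then show ?thesis by simp
qed

lemma wderiv_marginal:
  assumes der: "wderiv fb fu \<Gamma> (L, Y)" and dist: "distinct L" "distinct xs"
    and "xs \<noteq> []" and sub: "set xs \<subseteq> set L"
    and proj: "project L xs ` Y \<subseteq> S" and S: "S \<subseteq> unit_cube (length xs)"
  shows "wderiv fb fu \<Gamma> (xs, S)"
proof -
  define K where "K = xs @ filter (\<lambda>x. x \<notin> set xs) L"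
  have "distinct K" "set L = set K" using dist sub by (auto simp: K_def)
  from wderiv_reorder[OF der dist(1) this]
  have "wderiv fb fu \<Gamma> (xs, take (length xs) ` project L K ` Y)"
    unfolding K_def by (rule wderiv_take) (use \<open>xs \<noteq> []\<close> in auto)
  moreover have "take (length xs) ` project L K ` Y = project L xs ` Y"
    by (force simp: K_def project_append)
  ultimately show ?thesis using R5 proj S by metis
qed

subsection \<open>Completeness\<close>

primrec subformulas :: "('a, 'b, 'u) wform \<Rightarrow> ('a, 'b, 'u) wform set" where
  "subformulas (WAtom a) = {WAtom a}"
| "subformulas (WBin al \<sigma>1 \<sigma>2 w1 w2) = insert (WBin al \<sigma>1 \<sigma>2 w1 w2) (subformulas \<sigma>1 \<union> subformulas \<sigma>2)"
| "subformulas (WUn r \<sigma> w) = insert (WUn r \<sigma> w) (subformulas \<sigma>)"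

definition subformula_closed :: "('a, 'b, 'u) wform set \<Rightarrow> bool" where
  "subformula_closed F \<longleftrightarrow>
     (\<forall>al \<sigma>1 \<sigma>2 w1 w2. WBin al \<sigma>1 \<sigma>2 w1 w2 \<in> F \<longrightarrow> \<sigma>1 \<in> F \<and> \<sigma>2 \<in> F) \<and>
     (\<forall>r \<sigma> w. WUn r \<sigma> w \<in> F \<longrightarrow> \<sigma> \<in> F)"

lemma subformula_closedD:
  assumes "subformula_closed F"
  shows "WBin al \<sigma>1 \<sigma>2 w1 w2 \<in> F \<Longrightarrow> \<sigma>1 \<in> F \<and> \<sigma>2 \<in> F"
    and "WUn r \<sigma> w \<in> F \<Longrightarrow> \<sigma> \<in> F"
  using assms unfolding subformula_closed_def by fast+

lemma finite_subformulas: "finite (subformulas \<phi>)"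
  by (induction \<phi>) auto

lemma self_in_subformulas: "\<phi> \<in> subformulas \<phi>"
  by (cases \<phi>) auto

lemma subformulas_of_WBin:
  "WBin al \<sigma>1 \<sigma>2 w1 w2 \<in> subformulas \<phi> \<Longrightarrow> \<sigma>1 \<in> subformulas \<phi> \<and> \<sigma>2 \<in> subformulas \<phi>"
  by (induction \<phi>) (auto simp: self_in_subformulas)

lemma subformulas_of_WUn: "WUn r \<sigma> w \<in> subformulas \<phi> \<Longrightarrow> \<sigma> \<in> subformulas \<phi>"
  by (induction \<phi>) (auto simp: self_in_subformulas)

lemma subformula_closed_subformulas: "subformula_closed (subformulas \<phi>)"
  unfolding subformula_closed_def by (auto dest: subformulas_of_WBin subformulas_of_WUn)

lemma subformula_closed_UN:
  "(\<And>x. x \<in> A \<Longrightarrow> subformula_closed (F x)) \<Longrightarrow> subformula_closed (\<Union>x\<in>A. F x)"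
  unfolding subformula_closed_def by fast

definition tuple_model :: "('a, 'b, 'u) wform list \<Rightarrow> real list \<Rightarrow> 'a \<Rightarrow> real" where
  "tuple_model L s a = (if WAtom a \<in> set L then s ! index_of L (WAtom a) else 0)"

lemma is_model_tuple_model:
  assumes "s \<in> unit_cube (length L)"
  shows "is_model (tuple_model L s)"
proof -
  have "s ! index_of L (WAtom a) \<in> set s" if "WAtom a \<in> set L" for a
    using that assms by (simp add: unit_cube_def index_of_less_length)
  then have "s ! index_of L (WAtom a) \<in> {0..1}" if "WAtom a \<in> set L" for a
    using that assms unfolding unit_cube_def by blast
  then show ?thesis by (simp add: is_model_def tuple_model_def)
qed

lemma wval_tuple_model:
  assumes s: "s \<in> r6w_set fb fu L X" and closed: "subformula_closed (set L)"
    and "\<phi> \<in> set L"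
  shows "wval fb fu (tuple_model L s) \<phi> = s ! index_of L \<phi>"
  using \<open>\<phi> \<in> set L\<close>
proof (induction \<phi>)
  case (WAtom a)
  then show ?case by (simp add: tuple_model_def)
next
  case (WBin al \<sigma>1 \<sigma>2 w1 w2)
  let ?\<phi> = "WBin al \<sigma>1 \<sigma>2 w1 w2"
  have \<sigma>: "\<sigma>1 \<in> set L" "\<sigma>2 \<in> set L" using subformula_closedD(1)[OF closed WBin.prems] by simp_all
  have node: "L ! index_of L ?\<phi> = WBin al (L ! index_of L \<sigma>1) (L ! index_of L \<sigma>2) w1 w2"
    using \<sigma> WBin.prems by (simp add: nth_index_of)
  have respects: "\<forall>i<length L. \<forall>j<length L. \<forall>m<length L. \<forall>al w1 w2.
      L ! m = WBin al (L ! i) (L ! j) w1 w2 \<longrightarrow> fb al (s ! i) (s ! j) w1 w2 = s ! m"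
    using s unfolding r6w_set_def mem_Collect_eq by (elim conjE)
  have "fb al (s ! index_of L \<sigma>1) (s ! index_of L \<sigma>2) w1 w2 = s ! index_of L ?\<phi>"
    using respects[rule_format, OF index_of_less_length[OF \<sigma>(1)] index_of_less_length[OF \<sigma>(2)]
        index_of_less_length[OF WBin.prems] node] .
  then show ?case using WBin.IH \<sigma> by simp
next
  case (WUn r \<sigma> w)
  have \<sigma>: "\<sigma> \<in> set L" using subformula_closedD(2)[OF closed WUn.prems] .
  have node: "L ! index_of L (WUn r \<sigma> w) = WUn r (L ! index_of L \<sigma>) w"
    using \<sigma> WUn.prems by (simp add: nth_index_of)
  have respects: "\<forall>i<length L. \<forall>j<length L. \<forall>r w. L ! j = WUn r (L ! i) w \<longrightarrow> fu r (s ! i) w = s ! j"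
    using s unfolding r6w_set_def mem_Collect_eq by (elim conjE)
  have "fu r (s ! index_of L \<sigma>) w = s ! index_of L (WUn r \<sigma> w)"
    using respects[rule_format, OF index_of_less_length[OF \<sigma>] index_of_less_length[OF WUn.prems] node] .
  then show ?case using WUn.IH \<sigma> by simp
qed

lemma wderiv_complete:
  assumes fin: "finite \<Gamma>" and sent: "\<forall>d\<in>\<Gamma>. is_sentence d" "is_sentence \<gamma>"
    and ent: "wentails fb fu \<Gamma> \<gamma>"
  shows "wderiv fb fu \<Gamma> \<gamma>"
proof -
  define U where "U = (\<Union>\<phi>\<in>set (fst \<gamma>) \<union> (\<Union>d\<in>\<Gamma>. set (fst d)). subformulas \<phi>)"
  have "finite U" unfolding U_def using fin by (auto simp: finite_subformulas)
  then obtain L where L: "set L = U" "distinct L" using finite_distinct_list by blast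
  have closed: "subformula_closed (set L)"
    unfolding L(1) U_def by (intro subformula_closed_UN subformula_closed_subformulas)
  have \<gamma>L: "set (fst \<gamma>) \<subseteq> set L" and \<Gamma>L: "\<forall>d\<in>\<Gamma>. set (fst d) \<subseteq> set L"
    using self_in_subformulas unfolding L(1) U_def by blast+
  have \<gamma>: "fst \<gamma> \<noteq> []" "distinct (fst \<gamma>)" "snd \<gamma> \<subseteq> unit_cube (length (fst \<gamma>))"
    using sent(2) by (auto simp: is_sentence_def)
  define X where "X = {s \<in> unit_cube (length L). \<forall>d\<in>\<Gamma>. project L (fst d) s \<in> snd d}"
  have "wderiv fb fu \<Gamma> (L, X)"
    unfolding X_def using fin sent(1) \<Gamma>L L(2) \<gamma>(1) \<gamma>L
    by (intro wderiv_hyps_cylinder) auto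
  note derY = R6w[OF this]
  have "project L (fst \<gamma>) s \<in> snd \<gamma>" if s: "s \<in> r6w_set fb fu L X" for s
  proof -
    let ?M = "tuple_model L s"
    have sX: "s \<in> X" using s by (simp add: r6w_set_def)
    have val: "map (wval fb fu ?M) xs = project L xs s" if "set xs \<subseteq> set L" for xs
      using that wval_tuple_model[OF s closed] by (auto simp: project_def)
    have "is_model ?M" using sX by (simp add: X_def is_model_tuple_model)
    moreover have "\<forall>d\<in>\<Gamma>. wsat fb fu ?M d" using sX \<Gamma>L val by (simp add: X_def wsat_def)
    ultimately have "wsat fb fu ?M \<gamma>" using ent by (simp add: wentails_def)
    then show ?thesis using val[OF \<gamma>L] by (simp add: wsat_def)
  qed
  then have "wderiv fb fu \<Gamma> (fst \<gamma>, snd \<gamma>)"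
    using \<gamma> \<gamma>L by (intro wderiv_marginal[OF derY L(2)]) auto
  then show ?thesis by simp
qed

theorem theorem5:
  fixes fb :: "'b::finite \<Rightarrow> real \<Rightarrow> real \<Rightarrow> real \<Rightarrow> real \<Rightarrow> real"
    and fu :: "'u::finite \<Rightarrow> real \<Rightarrow> real \<Rightarrow> real"
    and \<Gamma> :: "('a::finite, 'b, 'u) wsentence set"
    and \<gamma> :: "('a, 'b, 'u) wsentence"
  assumes "admissible_conns fb fu"
    and "finite \<Gamma>"
    and "\<forall>d\<in>\<Gamma>. is_sentence d"
    and "is_sentence \<gamma>"
  shows "wderiv fb fu \<Gamma> \<gamma> \<longleftrightarrow> wentails fb fu \<Gamma> \<gamma>"
  using wderiv_sound[OF _ assms(1)] wderiv_complete[OF assms(2-4)]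
  unfolding wentails_def by blast

end
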